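(* Let $m\ge1$. For every $u$ in the even-parity sequence $\mathcal E^m$ and every $p$ in $\mathcal E^m$, the entry of $M_m$ in the row indexed by $u$ and the column indexed by $p$ is $H^{(u\oplus p)_1}\otimes\cdots\otimes H^{(u\oplus p)_m}$; and for every $u\in\mathcal E^m$ and every $p$ in the odd-parity sequence $\mathcal O^m$, the entry of $M'_m$ in the row indexed by $u$ and the column indexed by $p$ is $H^{(u\oplus p)_1}\otimes\cdots\otimes H^{(u\oplus p)_m}$. (Here $H^0=I$, $H^1=H$, and $(u\oplus p)_j$ is the $j$-th bit of the bitwise XOR of $u$ and $p$.) In other words, the matrix of local operations whose $(u,p)$ entry applies $H$ exactly at the positions where $u$ and the input $m$-tuple $p$ differ, with $u$ of even parity, coincides with $M_m$ when $p$ ranges over even-parity strings and with $M'_m$ when $p$ ranges over odd-parity strings.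
   Context: The matrices $M_i$, $M'_i$ (with entries formal tensor products of length $i$ of $I$ and $H$) are defined by $M_1=I$, $M'_1=H$, $M_{i+1}=\begin{pmatrix} I\otimes M_i & H\otimes M'_i\\ H\otimes M'_i & I\otimes M_i\end{pmatrix}$, $M'_{i+1}=\begin{pmatrix} I\otimes M'_i & H\otimes M_i\\ H\otimes M_i & I\otimes M'_i\end{pmatrix}$, where $A\otimes B$ tensors $A$ on the left with every entry of $B$. $H$ is the Hadamard gate and $I$ the identity. The rows of $M_m$ and $M'_m$ and the columns of $M_m$ are indexed by the $2^{m-1}$ even-parity $m$-bit strings in the order $\mathcal E^m$, and the columns of $M'_m$ by the $2^{m-1}$ odd-parity $m$-bit strings in the order $\mathcal O^m$, where these orders are defined recursively by $\mathcal E^1=(0)$, $\mathcal O^1=(1)$, $\mathcal E^{m+1}=(0e:e\in\mathcal E^m)$ followed by $(1o:o\in\mathcal O^m)$, and $\mathcal O^{m+1}=(0o:o\in\mathcal O^m)$ followed by $(1e:e\in\mathcal E^m)$ (e.g. $\mathcal E^3=(000,011,101,110)$). *)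

theory Defs
  imports Main
begin

datatype gate = I | H

text \<open>A formal tensor product G_1 \<otimes> ... \<otimes> G_i is the list [G_1,...,G_i].
  A matrix is a list of rows, each row a list of entries.\<close>
type_synonym entry = "gate list"
type_synonym gmatrix = "entry list list"

definition tens :: "gate \<Rightarrow> gmatrix \<Rightarrow> gmatrix" where
  "tens A B = map (map (\<lambda>e. A # e)) B"

definition block :: "gmatrix \<Rightarrow> gmatrix \<Rightarrow> gmatrix \<Rightarrow> gmatrix \<Rightarrow> gmatrix" where
  "block P Q R S = map2 (@) P Q @ map2 (@) R S"

text \<open>MM m = (M_m, M'_m) for m \<ge> 1 (the value at 0 is irrelevant).\<close>
fun MM :: "nat \<Rightarrow> gmatrix \<times> gmatrix" where
  "MM 0 = ([], [])"
| "MM (Suc 0) = ([[[I]]], [[[H]]])"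
| "MM (Suc (Suc n)) =
     (let (A, B) = MM (Suc n) in
       (block (tens I A) (tens H B) (tens H B) (tens I A),
        block (tens I B) (tens H A) (tens H A) (tens I B)))"

definition Mmat :: "nat \<Rightarrow> gmatrix" where "Mmat m = fst (MM m)"
definition Mmat' :: "nat \<Rightarrow> gmatrix" where "Mmat' m = snd (MM m)"

text \<open>Bit strings as bool lists (True = 1). EO m = (E^m, O^m) for m \<ge> 1.\<close>
fun EO :: "nat \<Rightarrow> bool list list \<times> bool list list" where
  "EO 0 = ([], [])"
| "EO (Suc 0) = ([[False]], [[True]])"
| "EO (Suc (Suc n)) =
     (let (Ev, Od) = EO (Suc n) in
       (map (Cons False) Ev @ map (Cons True) Od,
        map (Cons False) Od @ map (Cons True) Ev))"

definition Eseq :: "nat \<Rightarrow> bool list list" where "Eseq m = fst (EO m)"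
definition Oseq :: "nat \<Rightarrow> bool list list" where "Oseq m = snd (EO m)"

fun Hpow :: "bool \<Rightarrow> gate" where
  "Hpow False = I" | "Hpow True = H"

definition xor_op :: "nat \<Rightarrow> bool list \<Rightarrow> bool list \<Rightarrow> entry" where
  "xor_op m u p = map (\<lambda>j. Hpow (u ! j \<noteq> p ! j)) [0..<m]"

end

theory Submission
  imports Defs
begin

(* Write X_m(u, p) for H^((u xor p)_1) \<otimes> ... \<otimes> H^((u xor p)_m). Prepending bits a, b to
   u, p prepends H^(a xor b) to X(u, p), so the table of X_(m+1) over the recursively built
   orders E^(m+1) = (0E^m, 1O^m) and O^(m+1) = (0O^m, 1E^m) is a 2x2 block matrix whose blocks
   are I or H tensored with the tables of X_m over E^m and O^m. Exchanging E^m and O^m in both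
   arguments leaves these tables unchanged (an induction of the same shape), and then the block
   recursion is literally the one defining M_(m+1) and M'_(m+1). Everything also holds for
   m = 0, where all the sequences are empty. *)

definition table :: "('a \<Rightarrow> 'b \<Rightarrow> 'c) \<Rightarrow> 'a list \<Rightarrow> 'b list \<Rightarrow> 'c list list" where
  "table f rs cs = map (\<lambda>r. map (f r) cs) rs"

lemma nth_table:
  assumes "i < length rs" "j < length cs"
  shows "table f rs cs ! i ! j = f (rs ! i) (cs ! j)"
  using assms by (simp add: table_def)

lemma block_table:
  "block (table f rs cs) (table f rs ds) (table f ss cs) (table f ss ds) = table f (rs @ ss) (cs @ ds)"
  by (simp add: block_def table_def zip_map1 zip_map2 zip_same_conv_map comp_def)

lemma xor_op_Cons: "xor_op (Suc m) (a # u) (b # p) = Hpow (a \<noteq> b) # xor_op m u p"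
  unfolding xor_op_def by (simp only: map_upt_Suc) simp

lemma table_xor_op_Cons:
  "table (xor_op (Suc m)) (map (Cons a) rs) (map (Cons b) cs) = tens (Hpow (a \<noteq> b)) (table (xor_op m) rs cs)"
  by (simp add: table_def tens_def xor_op_Cons)

lemma table_xor_op_append:
  "table (xor_op (Suc m)) (map (Cons False) rs @ map (Cons True) ss) (map (Cons False) cs @ map (Cons True) ds)
     = block (tens I (table (xor_op m) rs cs)) (tens H (table (xor_op m) rs ds))
             (tens H (table (xor_op m) ss cs)) (tens I (table (xor_op m) ss ds))"
  by (simp flip: block_table add: table_xor_op_Cons)

lemma Eseq_Suc_Suc: "Eseq (Suc (Suc n)) = map (Cons False) (Eseq (Suc n)) @ map (Cons True) (Oseq (Suc n))"
  by (simp add: Eseq_def Oseq_def split: prod.split)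

lemma Oseq_Suc_Suc: "Oseq (Suc (Suc n)) = map (Cons False) (Oseq (Suc n)) @ map (Cons True) (Eseq (Suc n))"
  by (simp add: Eseq_def Oseq_def split: prod.split)

lemma Mmat_Suc_Suc:
  "Mmat (Suc (Suc n)) = block (tens I (Mmat (Suc n))) (tens H (Mmat' (Suc n)))
                              (tens H (Mmat' (Suc n))) (tens I (Mmat (Suc n)))"
  by (simp add: Mmat_def Mmat'_def split: prod.split)

lemma Mmat'_Suc_Suc:
  "Mmat' (Suc (Suc n)) = block (tens I (Mmat' (Suc n))) (tens H (Mmat (Suc n)))
                               (tens H (Mmat (Suc n))) (tens I (Mmat' (Suc n)))"
  by (simp add: Mmat_def Mmat'_def split: prod.split)

lemma table_xor_op_swap_Eseq_Oseq:
  "table (xor_op m) (Oseq m) (Oseq m) = table (xor_op m) (Eseq m) (Eseq m) \<and>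
   table (xor_op m) (Oseq m) (Eseq m) = table (xor_op m) (Eseq m) (Oseq m)"
proof (induction m rule: EO.induct)
  case 1
  then show ?case by (simp add: Eseq_def Oseq_def)
next
  case 2
  then show ?case by (simp add: Eseq_def Oseq_def table_def xor_op_def)
next
  case (3 n)
  then show ?case by (simp add: Eseq_Suc_Suc Oseq_Suc_Suc table_xor_op_append)
qed

lemma Mmat_Mmat'_table:
  "Mmat m = table (xor_op m) (Eseq m) (Eseq m) \<and> Mmat' m = table (xor_op m) (Eseq m) (Oseq m)"
proof (induction m rule: EO.induct)
  case 1
  then show ?case by (simp add: Mmat_def Mmat'_def Eseq_def table_def)
next
  case 2
  then show ?case by (simp add: Mmat_def Mmat'_def Eseq_def Oseq_def table_def xor_op_def)
next
  case (3 n)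
  then show ?case
    using table_xor_op_swap_Eseq_Oseq[of "Suc n"]
    by (simp add: Mmat_Suc_Suc Mmat'_Suc_Suc Eseq_Suc_Suc Oseq_Suc_Suc table_xor_op_append)
qed

theorem lemma1:
  fixes m :: nat
  assumes "m \<ge> 1"
  shows "(\<forall>i < length (Eseq m). \<forall>j < length (Eseq m).
            Mmat m ! i ! j = xor_op m (Eseq m ! i) (Eseq m ! j))
       \<and> (\<forall>i < length (Eseq m). \<forall>j < length (Oseq m).
            Mmat' m ! i ! j = xor_op m (Eseq m ! i) (Oseq m ! j))"
  using Mmat_Mmat'_table[of m] by (simp add: nth_table)

end
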